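(* Let $\theta$ be a random variable with a continuous distribution, let $u(q,\theta)$ be strictly concave and monotone increasing in $q$ for every $\theta$, with marginal utility $\mu(q,\theta)=\partial u(q,\theta)/\partial q$ (so $\mu>0$ and $\partial\mu/\partial q<0$). Let $\pi_0>0$, $\pi_2>0$, and let $\phi:\mathbb{R}\to\mathbb{R}$ be a penalty function with $\phi(0)=\phi'(0)=0$, $\phi(x)=\phi(-x)$ for all $x$, and $\phi''(x)>0$ for all $x$. For a baseline report $f\in\mathbb{R}$ define $q^a(\theta)=\arg\min_q\{\pi_0 q-u(q,\theta)\}$, $q^b(f,\theta)=\arg\min_q\{\pi_0 q-u(q,\theta)+\phi(f-q)\}$, $q^c(\theta)=\arg\min_q\{\pi_0 q-u(q,\theta)-\pi_2(f-q)\}$. Then for every $\theta$: (i) $q^c(\theta)<q^a(\theta)$, and (ii) either $q^a(\theta)<q^b(f,\theta)<f$ or $f<q^b(f,\theta)<q^a(\theta)$.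
   Context: $q^a$ is the consumption of a consumer not participating in the demand response program, $q^b$ the consumption of a participating consumer who is not called (and is penalized by $\phi$ for deviating from its reported baseline $f$), and $q^c$ the consumption of a participating consumer who is called and rewarded $\pi_2$ per unit reduction below $f$. The minimizers are characterized by the first-order conditions $\pi_0=\mu(q^a,\theta)$, $\pi_0-\mu(q^b,\theta)-\phi'(f-q^b)=0$, and $\pi_0+\pi_2=\mu(q^c,\theta)$. *)

theory Defs
  imports Complex_Main
begin

end

theory Submission
  imports Defs
begin

(* Each minimiser is pinned down by its first-order condition (Fermat's rule at a global
   minimum): mu(qa) = pi0, mu(qc) = pi0 + pi2 and mu(qb) = pi0 - phi'(f - qb).  As mu is strictly
   decreasing in q, comparing marginal utilities compares quantities, so qc < qa.  As phi' is
   strictly increasing with phi'(0) = 0, the sign of mu(qa) - mu(qb) = phi'(f - qb) is that of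
   f - qb: hence qa < qb iff qb < f and qb < qa iff f < qb, and qb = f would force qa = f. *)

lemma has_real_derivative_zero_at_arg_min:
  fixes g :: "real \<Rightarrow> real"
  assumes "(g has_real_derivative g') (at x)" and "is_arg_min g (\<lambda>_. True) x"
  shows "g' = 0"
  using DERIV_local_min[where f = g and x = x and l = g' and d = 1] assms
  by (auto simp: is_arg_min_linorder)

lemma DERIV_pos_imp_less_iff:
  fixes g g' :: "real \<Rightarrow> real"
  assumes "\<And>x. (g has_real_derivative g' x) (at x)" and "\<And>x. g' x > 0"
  shows "g x < g y \<longleftrightarrow> x < y"
proof -
  have "a < b \<Longrightarrow> g a < g b" for a b
    using DERIV_pos_imp_increasing assms by blast
  then show ?thesis
    by (metis less_asym linorder_neqE_linordered_idom)
qed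

lemma DERIV_neg_imp_less_iff:
  fixes g g' :: "real \<Rightarrow> real"
  assumes "\<And>x. (g has_real_derivative g' x) (at x)" and "\<And>x. g' x < 0"
  shows "g x < g y \<longleftrightarrow> y < x"
proof -
  have "a < b \<Longrightarrow> g b < g a" for a b
    using DERIV_neg_imp_decreasing assms by blast
  then show ?thesis
    by (metis less_asym linorder_neqE_linordered_idom)
qed

theorem lemma1:
  fixes u mu dmu :: "real \<Rightarrow> 'a \<Rightarrow> real"
    and phi phi' phi'' :: "real \<Rightarrow> real"
    and pi0 pi2 f :: real
    and qa qb qc :: "'a \<Rightarrow> real"
  assumes u_deriv: "\<And>\<theta> q. ((\<lambda>q. u q \<theta>) has_real_derivative mu q \<theta>) (at q)"
    and mu_pos: "\<And>\<theta> q. mu q \<theta> > 0"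
    and mu_deriv: "\<And>\<theta> q. ((\<lambda>q. mu q \<theta>) has_real_derivative dmu q \<theta>) (at q)"
    and dmu_neg: "\<And>\<theta> q. dmu q \<theta> < 0"
    and pi0_pos: "pi0 > 0" and pi2_pos: "pi2 > 0"
    and phi_deriv: "\<And>x. (phi has_real_derivative phi' x) (at x)"
    and phi'_deriv: "\<And>x. (phi' has_real_derivative phi'' x) (at x)"
    and phi''_pos: "\<And>x. phi'' x > 0"
    and phi0: "phi 0 = 0" and phi'0: "phi' 0 = 0"
    and phi_even: "\<And>x. phi x = phi (- x)"
    and qa_min: "\<And>\<theta>. is_arg_min (\<lambda>q. pi0 * q - u q \<theta>) (\<lambda>_. True) (qa \<theta>)"
    and qb_min: "\<And>\<theta>. is_arg_min (\<lambda>q. pi0 * q - u q \<theta> + phi (f - q)) (\<lambda>_. True) (qb \<theta>)"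
    and qc_min: "\<And>\<theta>. is_arg_min (\<lambda>q. pi0 * q - u q \<theta> - pi2 * (f - q)) (\<lambda>_. True) (qc \<theta>)"
  shows "\<forall>\<theta>. qc \<theta> < qa \<theta> \<and>
           (f \<noteq> qa \<theta> \<longrightarrow> ((qa \<theta> < qb \<theta> \<and> qb \<theta> < f) \<or> (f < qb \<theta> \<and> qb \<theta> < qa \<theta>)))"
proof
  fix \<theta>
  have mu_less_iff: "mu x \<theta> < mu y \<theta> \<longleftrightarrow> y < x" for x y
    using DERIV_neg_imp_less_iff[OF mu_deriv dmu_neg] .
  have phi'_pos_iff: "0 < phi' x \<longleftrightarrow> 0 < x" and phi'_neg_iff: "phi' x < 0 \<longleftrightarrow> x < 0" for x
    using DERIV_pos_imp_less_iff[OF phi'_deriv phi''_pos, of 0 x]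
      DERIV_pos_imp_less_iff[OF phi'_deriv phi''_pos, of x 0] phi'0 by simp_all
  have "pi0 - mu (qa \<theta>) \<theta> = 0"
    by (rule has_real_derivative_zero_at_arg_min[OF _ qa_min])
      (auto intro!: derivative_eq_intros u_deriv)
  then have foc_a: "mu (qa \<theta>) \<theta> = pi0"
    by simp
  have "pi0 - mu (qc \<theta>) \<theta> + pi2 = 0"
    by (rule has_real_derivative_zero_at_arg_min[OF _ qc_min])
      (auto intro!: derivative_eq_intros u_deriv)
  then have foc_c: "mu (qc \<theta>) \<theta> = pi0 + pi2"
    by simp
  have "pi0 - mu (qb \<theta>) \<theta> - phi' (f - qb \<theta>) = 0"
    by (rule has_real_derivative_zero_at_arg_min[OF _ qb_min])
      (auto intro!: derivative_eq_intros u_deriv DERIV_chain2[OF phi_deriv])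
  then have foc_b: "mu (qa \<theta>) \<theta> - mu (qb \<theta>) \<theta> = phi' (f - qb \<theta>)"
    using foc_a by simp
  have "qc \<theta> < qa \<theta>"
    using mu_less_iff[of "qa \<theta>" "qc \<theta>"] foc_a foc_c pi2_pos by simp
  moreover have "qa \<theta> < qb \<theta> \<longleftrightarrow> qb \<theta> < f"
    using mu_less_iff[of "qb \<theta>" "qa \<theta>"] phi'_pos_iff[of "f - qb \<theta>"] foc_b by linarith
  moreover have "qb \<theta> < qa \<theta> \<longleftrightarrow> f < qb \<theta>"
    using mu_less_iff[of "qa \<theta>" "qb \<theta>"] phi'_neg_iff[of "f - qb \<theta>"] foc_b by linarith
  ultimately show "qc \<theta> < qa \<theta> \<and>
      (f \<noteq> qa \<theta> \<longrightarrow> ((qa \<theta> < qb \<theta> \<and> qb \<theta> < f) \<or> (f < qb \<theta> \<and> qb \<theta> < qa \<theta>)))"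
    by linarith
qed

end
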